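(* Let $n\ge1$ be an integer and let $k\in\mathbb{R}\setminus A_n$. Then there is a unique pair $(a,b)\in\mathbb{R}^2$ with $(a,b)\neq(0,0)$ satisfying both $S^{(a,b)}_{k,n+1}-S^{(a,b)}_{k,n}=-bk+2b-a$ and $4a^3+27b^2=0$; namely $a=-\frac{27(F_n(k)+1)^2}{4(G_n(k)+k-2)^2}$, $b=\frac{27(F_n(k)+1)^3}{4(G_n(k)+k-2)^3}$.
   Context: For real $k,a,b$, the generalized $k$-FL sequence is $S^{(a,b)}_{k,0}=2b$, $S^{(a,b)}_{k,1}=bk+a$, $S^{(a,b)}_{k,m}=kS^{(a,b)}_{k,m-1}+S^{(a,b)}_{k,m-2}$ ($m\ge2$). Define $f_m,g_m\in\mathbb{Z}[T]$ by $f_0=0,f_1=1,g_0=2,g_1=T$, $f_m=Tf_{m-1}+f_{m-2}$, $g_m=Tg_{m-1}+g_{m-2}$, and set $F_n=f_{n+1}-f_n$, $G_n=g_{n+1}-g_n$, so that $S^{(a,b)}_{k,n+1}-S^{(a,b)}_{k,n}=F_n(k)a+G_n(k)b$. Let $A_n=\{k\in\mathbb{R}: F_n(k)+1=0 \text{ or } G_n(k)+k-2=0\}$. *)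

theory Defs
  imports Complex_Main "HOL-Computational_Algebra.Polynomial"
begin

fun S :: "real \<Rightarrow> real \<Rightarrow> real \<Rightarrow> nat \<Rightarrow> real" where
  "S a b k 0 = 2 * b"
| "S a b k (Suc 0) = b * k + a"
| "S a b k (Suc (Suc m)) = k * S a b k (Suc m) + S a b k m"

fun fpoly :: "nat \<Rightarrow> int poly" where
  "fpoly 0 = 0"
| "fpoly (Suc 0) = 1"
| "fpoly (Suc (Suc m)) = [:0, 1:] * fpoly (Suc m) + fpoly m"

fun gpoly :: "nat \<Rightarrow> int poly" where
  "gpoly 0 = [:2:]"
| "gpoly (Suc 0) = [:0, 1:]"
| "gpoly (Suc (Suc m)) = [:0, 1:] * gpoly (Suc m) + gpoly m"

definition Fpoly :: "nat \<Rightarrow> int poly" where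
  "Fpoly n = fpoly (n + 1) - fpoly n"

definition Gpoly :: "nat \<Rightarrow> int poly" where
  "Gpoly n = gpoly (n + 1) - gpoly n"

definition evalR :: "int poly \<Rightarrow> real \<Rightarrow> real" where
  "evalR p k = poly (map_poly of_int p) k"

definition A_set :: "nat \<Rightarrow> real set" where
  "A_set n = {k. evalR (Fpoly n) k + 1 = 0 \<or> evalR (Gpoly n) k + k - 2 = 0}"

end

theory Submission
  imports Defs
begin

text \<open>
  By induction S a b k m = f_m(k) a + g_m(k) b, so the difference condition is the line
  P a + Q b = 0 with P = F_n(k) + 1 and Q = G_n(k) + k - 2, both nonzero since k is not in A_n.
  Substituting a = -Q b / P into the cusp 4 a^3 + 27 b^2 = 0 gives b^2 (27 P^3 - 4 Q^3 b) = 0,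
  and b = 0 would force (a, b) = (0, 0); so the line meets the cusp away from the origin in
  exactly one point.
\<close>

lemma evalR_add: "evalR (p + q) k = evalR p k + evalR q k"
  unfolding evalR_def by (subst poly_eqI[of _ "map_poly of_int p + map_poly of_int q"])
    (simp_all add: coeff_map_poly)

lemma evalR_diff: "evalR (p - q) k = evalR p k - evalR q k"
  unfolding evalR_def by (subst poly_eqI[of _ "map_poly of_int p - map_poly of_int q"])
    (simp_all add: coeff_map_poly)

lemma evalR_X_mult: "evalR ([:0, 1:] * p) k = k * evalR p k"
  by (simp add: evalR_def map_poly_pCons)

lemma S_eq_fpoly_gpoly: "S a b k m = evalR (fpoly m) k * a + evalR (gpoly m) k * b"
  by (induction m rule: fpoly.induct)
    (simp_all add: evalR_add evalR_X_mult algebra_simps, simp_all add: evalR_def map_poly_pCons)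

lemma S_Suc_diff: "S a b k (n + 1) - S a b k n = evalR (Fpoly n) k * a + evalR (Gpoly n) k * b"
  by (simp add: S_eq_fpoly_gpoly Fpoly_def Gpoly_def evalR_diff algebra_simps)

lemma line_cusp_point:
  fixes P Q :: real
  assumes "P \<noteq> 0" "Q \<noteq> 0"
  defines "a \<equiv> - (27 * P ^ 2) / (4 * Q ^ 2)" and "b \<equiv> (27 * P ^ 3) / (4 * Q ^ 3)"
  shows "(a, b) \<noteq> (0, 0) \<and> P * a + Q * b = 0 \<and> 4 * a ^ 3 + 27 * b ^ 2 = 0"
proof -
  have "b \<noteq> 0" using assms by (simp add: b_def)
  moreover have "P * a + Q * b = 0"
    using assms by (simp add: a_def b_def field_simps power3_eq_cube power2_eq_square)
  moreover have "a ^ 3 = - (27 ^ 3 * P ^ 6) / (64 * Q ^ 6)" "b ^ 2 = (27 ^ 2 * P ^ 6) / (16 * Q ^ 6)"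
    by (simp_all add: a_def b_def power_divide power_mult_distrib flip: power_mult)
  ultimately show ?thesis by simp
qed

lemma line_cusp_point_unique:
  fixes P Q a b :: real
  assumes "P \<noteq> 0" "Q \<noteq> 0" "(a, b) \<noteq> (0, 0)" "P * a + Q * b = 0" "4 * a ^ 3 + 27 * b ^ 2 = 0"
  shows "a = - (27 * P ^ 2) / (4 * Q ^ 2)" "b = (27 * P ^ 3) / (4 * Q ^ 3)"
proof -
  have a: "a = - Q * b / P" using assms(1,4) by (simp add: field_simps)
  with assms(3) have "b \<noteq> 0" by auto
  have "b ^ 2 * (27 * P ^ 3 - 4 * Q ^ 3 * b) = 0"
    using assms(1,5) by (simp add: a field_simps power3_eq_cube power2_eq_square)
  with \<open>b \<noteq> 0\<close> have "27 * P ^ 3 = 4 * Q ^ 3 * b" by simp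
  then show b: "b = (27 * P ^ 3) / (4 * Q ^ 3)" using assms(2) by (simp add: field_simps)
  show "a = - (27 * P ^ 2) / (4 * Q ^ 2)"
    using assms(1,2) by (simp add: a b field_simps power3_eq_cube power2_eq_square)
qed

theorem lemma3p5:
  fixes n :: nat and k :: real
  assumes "n \<ge> 1" and "k \<notin> A_set n"
  shows "(\<exists>!p :: real \<times> real. p \<noteq> (0, 0) \<and>
            S (fst p) (snd p) k (n + 1) - S (fst p) (snd p) k n
              = - (snd p) * k + 2 * (snd p) - fst p \<and>
            4 * (fst p) ^ 3 + 27 * (snd p) ^ 2 = 0)
       \<and> (let a = - (27 * (evalR (Fpoly n) k + 1) ^ 2) / (4 * (evalR (Gpoly n) k + k - 2) ^ 2);
              b = (27 * (evalR (Fpoly n) k + 1) ^ 3) / (4 * (evalR (Gpoly n) k + k - 2) ^ 3)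
          in (a, b) \<noteq> (0, 0) \<and> S a b k (n + 1) - S a b k n = - b * k + 2 * b - a \<and>
             4 * a ^ 3 + 27 * b ^ 2 = 0)"
proof -
  define P where "P = evalR (Fpoly n) k + 1"
  define Q where "Q = evalR (Gpoly n) k + k - 2"
  have "P \<noteq> 0" "Q \<noteq> 0" using assms(2) by (auto simp: A_set_def P_def Q_def)
  have line: "S a b k (n + 1) - S a b k n = - b * k + 2 * b - a \<longleftrightarrow> P * a + Q * b = 0" for a b
    using S_Suc_diff[of a b k n] by (simp add: P_def Q_def algebra_simps)
  define a0 where "a0 = - (27 * P ^ 2) / (4 * Q ^ 2)"
  define b0 where "b0 = (27 * P ^ 3) / (4 * Q ^ 3)"
  have sol: "(a0, b0) \<noteq> (0, 0) \<and> P * a0 + Q * b0 = 0 \<and> 4 * a0 ^ 3 + 27 * b0 ^ 2 = 0"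
    using line_cusp_point[OF \<open>P \<noteq> 0\<close> \<open>Q \<noteq> 0\<close>] by (simp add: a0_def b0_def)
  have "\<exists>!p :: real \<times> real. p \<noteq> (0, 0) \<and> P * fst p + Q * snd p = 0 \<and>
          4 * (fst p) ^ 3 + 27 * (snd p) ^ 2 = 0"
  proof (rule ex1I[of _ "(a0, b0)"])
    fix p :: "real \<times> real"
    assume "p \<noteq> (0, 0) \<and> P * fst p + Q * snd p = 0 \<and> 4 * (fst p) ^ 3 + 27 * (snd p) ^ 2 = 0"
    then show "p = (a0, b0)"
      using line_cusp_point_unique[OF \<open>P \<noteq> 0\<close> \<open>Q \<noteq> 0\<close>, of "fst p" "snd p"]
      unfolding a0_def b0_def by (metis prod.collapse)
  qed (use sol in simp)
  with sol show ?thesis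
    unfolding line Let_def by (simp add: a0_def b0_def P_def Q_def)
qed

end
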